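(* In the quantum group $U_q(\mathfrak{sl}_n(\mathbb{C}))$ (with $q\in\mathbb{C}^\times$, $q\neq\pm1$), the elements $E_{i,j}$ defined below satisfy $E_{i,i+1}=e_i$ and $E_{i+1,i}=f_i$ for $i=1,\dots,n-1$, and $E_{i,j}=E_{i,k}E_{k,j}-qE_{k,j}E_{i,k}$ for $1\le i<k<j\le n$, and $E_{i,j}=E_{i,k}E_{k,j}-q^{-1}E_{k,j}E_{i,k}$ for $n\ge i>k>j\ge 1$.
   Context: $U_q(\mathfrak{sl}_n(\mathbb{C}))$ is the unital associative $\mathbb{C}$-algebra generated by $e_i,f_i,k_i,k_i^{-1}$ ($1\le i\le n-1$) with relations $k_ik_i^{-1}=k_i^{-1}k_i=1$, $k_ik_j=k_jk_i$, $k_ie_jk_i^{-1}=q^{a_{ij}}e_j$, $k_if_jk_i^{-1}=q^{-a_{ij}}f_j$, $e_if_j-f_je_i=\delta_{ij}\frac{k_i-k_i^{-1}}{q-q^{-1}}$, and $e_i^2e_j-(q+q^{-1})e_ie_je_i+e_je_i^2=0$, $f_i^2f_j-(q+q^{-1})f_if_jf_i+f_jf_i^2=0$ for $|i-j|=1$, $e_ie_j=e_je_i$, $f_if_j=f_jf_i$ for $|i-j|>1$; here $a_{ii}=2$, $a_{ij}=-1$ if $|i-j|=1$, $a_{ij}=0$ if $|i-j|>1$. There are algebra automorphisms $T_1,\dots,T_{n-1}$ of $U_q(\mathfrak{sl}_n(\mathbb{C}))$ (satisfying the braid relations) determined by $T_i(e_i)=-f_ik_i^{-1}$, $T_i(k_i)=k_i^{-1}$,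 $T_i(f_i)=-k_ie_i$; for $|i-j|=1$: $T_i(e_j)=e_ie_j-qe_je_i$, $T_i(k_j)=k_ik_j$, $T_i(f_j)=f_jf_i-q^{-1}f_if_j$; for $|i-j|>1$: $T_i(e_j)=e_j$, $T_i(k_j)=k_j$, $T_i(f_j)=f_j$. For $1\le i<j\le n$ let $T_{w_{i,j}}=(T_1T_2\cdots T_{n-1})(T_1\cdots T_{n-2})\cdots(T_1\cdots T_{n-i+1})(T_1\cdots T_{j-i-1})$ (there are $i-1$ blocks of the form $T_1\cdots T_{n-l}$, $l=1,\dots,i-1$, followed by $T_1\cdots T_{j-i-1}$, which is empty when $j=i+1$), and define $E_{i,j}=T_{w_{i,j}}(e_{j-i})$ and $E_{j,i}=T_{w_{i,j}}(f_{j-i})$. *)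

theory Defs
  imports Complex_Main
begin

text \<open>A complex algebra structure on a ring 'a is given by a central unital
ring homomorphism sigma from the complex numbers (scalar c acts as sigma c * _).\<close>
definition calg :: "(complex \<Rightarrow> 'a::ring_1) \<Rightarrow> bool" where
  "calg \<sigma> \<longleftrightarrow> (\<forall>a b. \<sigma> (a + b) = \<sigma> a + \<sigma> b) \<and> (\<forall>a b. \<sigma> (a * b) = \<sigma> a * \<sigma> b)
     \<and> \<sigma> 1 = 1 \<and> (\<forall>c x. \<sigma> c * x = x * \<sigma> c)"

definition calg_hom :: "(complex \<Rightarrow> 'a::ring_1) \<Rightarrow> ('a \<Rightarrow> 'a) \<Rightarrow> bool" where
  "calg_hom \<sigma> T \<longleftrightarrow> (\<forall>x y. T (x + y) = T x + T y) \<and> (\<forall>x y. T (x * y) = T x * T y)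
     \<and> T 1 = 1 \<and> (\<forall>c. T (\<sigma> c) = \<sigma> c)"

definition cartan :: "nat \<Rightarrow> nat \<Rightarrow> int" where
  "cartan i j = (if i = j then 2 else if i + 1 = j \<or> j + 1 = i then -1 else 0)"

definition adj :: "nat \<Rightarrow> nat \<Rightarrow> bool" where
  "adj i j \<longleftrightarrow> i + 1 = j \<or> j + 1 = i"

definition far :: "nat \<Rightarrow> nat \<Rightarrow> bool" where
  "far i j \<longleftrightarrow> i + 1 < j \<or> j + 1 < i"

definition Uq_rels ::
  "nat \<Rightarrow> complex \<Rightarrow> (complex \<Rightarrow> 'a::ring_1) \<Rightarrow> (nat \<Rightarrow> 'a) \<Rightarrow> (nat \<Rightarrow> 'a) \<Rightarrow> (nat \<Rightarrow> 'a) \<Rightarrow> (nat \<Rightarrow> 'a) \<Rightarrow> bool" where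
  "Uq_rels n q \<sigma> e f k kinv \<longleftrightarrow>
    (\<forall>i\<in>{1..<n}. k i * kinv i = 1 \<and> kinv i * k i = 1) \<and>
    (\<forall>i\<in>{1..<n}. \<forall>j\<in>{1..<n}. k i * k j = k j * k i) \<and>
    (\<forall>i\<in>{1..<n}. \<forall>j\<in>{1..<n}. k i * e j * kinv i = \<sigma> (q powi cartan i j) * e j) \<and>
    (\<forall>i\<in>{1..<n}. \<forall>j\<in>{1..<n}. k i * f j * kinv i = \<sigma> (q powi (- cartan i j)) * f j) \<and>
    (\<forall>i\<in>{1..<n}. \<forall>j\<in>{1..<n}. e i * f j - f j * e i =
        (if i = j then \<sigma> (inverse (q - inverse q)) * (k i - kinv i) else 0)) \<and>
    (\<forall>i\<in>{1..<n}. \<forall>j\<in>{1..<n}. adj i j \<longrightarrow>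
        e i * e i * e j - \<sigma> (q + inverse q) * (e i * e j * e i) + e j * e i * e i = 0 \<and>
        f i * f i * f j - \<sigma> (q + inverse q) * (f i * f j * f i) + f j * f i * f i = 0) \<and>
    (\<forall>i\<in>{1..<n}. \<forall>j\<in>{1..<n}. far i j \<longrightarrow> e i * e j = e j * e i \<and> f i * f j = f j * f i)"

definition lusztig_T ::
  "nat \<Rightarrow> complex \<Rightarrow> (complex \<Rightarrow> 'a::ring_1) \<Rightarrow> (nat \<Rightarrow> 'a) \<Rightarrow> (nat \<Rightarrow> 'a) \<Rightarrow> (nat \<Rightarrow> 'a) \<Rightarrow> (nat \<Rightarrow> 'a)
     \<Rightarrow> (nat \<Rightarrow> 'a \<Rightarrow> 'a) \<Rightarrow> bool" where
  "lusztig_T n q \<sigma> e f k kinv T \<longleftrightarrow>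
    (\<forall>i\<in>{1..<n}. calg_hom \<sigma> (T i) \<and> bij (T i)) \<and>
    (\<forall>i\<in>{1..<n}. T i (e i) = - (f i * kinv i) \<and> T i (k i) = kinv i \<and> T i (f i) = - (k i * e i)) \<and>
    (\<forall>i\<in>{1..<n}. \<forall>j\<in>{1..<n}. adj i j \<longrightarrow>
        T i (e j) = e i * e j - \<sigma> q * (e j * e i) \<and> T i (k j) = k i * k j \<and>
        T i (f j) = f j * f i - \<sigma> (inverse q) * (f i * f j)) \<and>
    (\<forall>i\<in>{1..<n}. \<forall>j\<in>{1..<n}. far i j \<longrightarrow>
        T i (e j) = e j \<and> T i (k j) = k j \<and> T i (f j) = f j) \<and>
    (\<forall>i\<in>{1..<n}. \<forall>j\<in>{1..<n}. adj i j \<longrightarrow> T i \<circ> T j \<circ> T i = T j \<circ> T i \<circ> T j) \<and>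
    (\<forall>i\<in>{1..<n}. \<forall>j\<in>{1..<n}. far i j \<longrightarrow> T i \<circ> T j = T j \<circ> T i)"

text \<open>T_1 T_2 ... T_m (composition; T_m is applied first).\<close>
definition Tchain :: "(nat \<Rightarrow> 'a \<Rightarrow> 'a) \<Rightarrow> nat \<Rightarrow> 'a \<Rightarrow> 'a" where
  "Tchain T m = foldr (\<circ>) (map T [1..<m+1]) id"

text \<open>T_{w_{i,j}} = (T_1..T_{n-1})(T_1..T_{n-2})...(T_1..T_{n-i+1})(T_1..T_{j-i-1}).\<close>
definition Tw :: "nat \<Rightarrow> (nat \<Rightarrow> 'a \<Rightarrow> 'a) \<Rightarrow> nat \<Rightarrow> nat \<Rightarrow> 'a \<Rightarrow> 'a" where
  "Tw n T i j = foldr (\<circ>) (map (\<lambda>l. Tchain T (n - l)) [1..<i]) id \<circ> Tchain T (j - i - 1)"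

definition Eij :: "nat \<Rightarrow> (nat \<Rightarrow> 'a \<Rightarrow> 'a) \<Rightarrow> (nat \<Rightarrow> 'a) \<Rightarrow> (nat \<Rightarrow> 'a) \<Rightarrow> nat \<Rightarrow> nat \<Rightarrow> 'a" where
  "Eij n T e f a b = (if a < b then Tw n T a b (e (b - a))
                      else if b < a then Tw n T b a (f (a - b)) else undefined)"

end

theory Submission imports Defs begin

text \<open>Write [x, y]_c for x y - c y x. The rank-two identity T_j T_{j+1} e_j = e_{j+1}, together
  with T_j e_l = e_l for |j - l| > 1, shows that T_1 ... T_m maps e_l to e_{l+1} for l < m, so the
  first i - 1 blocks of T_{w_{i,j}} map e_l to e_{l+i-1}. Since
  T_1 ... T_m e_{m+1} = [T_1 ... T_{m-1} e_m, e_{m+1}]_q, applying these blocks yields the recursion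
  E_{i,j+1} = [E_{i,j}, e_j]_q. The element E_{i,k} commutes with e_l for l > k, and for commuting
  A and C the q-Jacobi identity [[A, B]_q, C]_q = [A, [B, C]_q]_q holds, so induction on j turns
  the recursion into E_{i,j} = [E_{i,k}, E_{k,j}]_q. The lower triangle is analogous, with the f_l
  and q^{-1}.\<close>

lemma calg_hom_id: "calg_hom \<sigma> id"
  unfolding calg_hom_def by simp

lemma calg_hom_comp: "calg_hom \<sigma> g \<Longrightarrow> calg_hom \<sigma> h \<Longrightarrow> calg_hom \<sigma> (g \<circ> h)"
  unfolding calg_hom_def by simp

lemma calg_hom_mult: "calg_hom \<sigma> g \<Longrightarrow> g (x * y) = g x * g y"
  unfolding calg_hom_def by blast

lemma calg_hom_diff: "calg_hom \<sigma> g \<Longrightarrow> g (x - y) = g x - g y"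
  unfolding calg_hom_def by (metis diff_add_cancel eq_diff_eq)

lemma Tchain_0 [simp]: "Tchain T 0 = id"
  unfolding Tchain_def by simp

lemma foldr_comp_id: "foldr (\<circ>) fs g = foldr (\<circ>) fs id \<circ> g"
  by (induction fs) auto

lemma Tchain_Suc: "Tchain T (Suc m) = Tchain T m \<circ> T (Suc m)"
  unfolding Tchain_def by (simp add: foldr_comp_id[of _ "T (Suc m)"])

locale complex_algebra =
  fixes \<sigma> :: "complex \<Rightarrow> 'a::ring_1"
  assumes calg: "calg \<sigma>"
begin

lemma scalar_add: "\<sigma> (a + b) = \<sigma> a + \<sigma> b"
  and scalar_mult: "\<sigma> (a * b) = \<sigma> a * \<sigma> b"
  and scalar_one: "\<sigma> 1 = 1"
  and scalar_central: "\<sigma> c * x = x * \<sigma> c"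
  using calg unfolding calg_def by blast+

lemma scalar_diff: "\<sigma> (a - b) = \<sigma> a - \<sigma> b"
  by (metis add_diff_cancel diff_add_cancel scalar_add)

definition cscale :: "complex \<Rightarrow> 'a \<Rightarrow> 'a" where
  "cscale c x = \<sigma> c * x"

lemma cscale_mult_left [simp]: "cscale c x * y = cscale c (x * y)"
  by (simp add: cscale_def mult.assoc)

lemma cscale_mult_right [simp]: "x * cscale c y = cscale c (x * y)"
  by (metis cscale_def mult.assoc scalar_central)

lemma cscale_cscale [simp]: "cscale c (cscale d x) = cscale (c * d) x"
  by (simp add: cscale_def scalar_mult mult.assoc)

lemma cscale_one [simp]: "cscale 1 x = x"
  by (simp add: cscale_def scalar_one)

lemma cscale_minus [simp]: "cscale c (- x) = - cscale c x"
  by (simp add: cscale_def)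

lemma cscale_diff: "cscale c (x - y) = cscale c x - cscale c y"
  by (simp add: cscale_def algebra_simps)

lemma cscale_diff_left: "cscale c x - cscale d x = cscale (c - d) x"
  by (simp add: cscale_def scalar_diff algebra_simps)

lemma cscale_zero_left [simp]: "cscale 0 x = 0"
  using cscale_diff_left[of 0 x 0] by simp

lemma cscale_uminus_left: "cscale (- c) x = - cscale c x"
  using cscale_diff_left[of 0 x c] by simp

lemma calg_hom_cscale: "calg_hom \<sigma> g \<Longrightarrow> g (cscale c x) = cscale c (g x)"
  unfolding calg_hom_def cscale_def by simp

lemma conj_eigen_commute:
  assumes "K * Ki = 1" "Ki * K = 1" "K * x * Ki = cscale c x" "c \<noteq> 0"
  shows "K * x = cscale c (x * K)" and "Ki * x = cscale (inverse c) (x * Ki)"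
proof -
  have "K * x = (K * x * Ki) * K"
    using assms(2) by (simp add: mult.assoc)
  then show "K * x = cscale c (x * K)"
    using assms(3) by simp
  have "cscale c (Ki * x) = Ki * (K * x * Ki)"
    using assms(3) by simp
  also have "\<dots> = x * Ki"
    using assms(2) by (simp add: mult.assoc[symmetric])
  finally show "Ki * x = cscale (inverse c) (x * Ki)"
    using assms(4) by (metis cscale_cscale cscale_one field_class.field_inverse mult.commute)
qed

definition qcomm :: "complex \<Rightarrow> 'a \<Rightarrow> 'a \<Rightarrow> 'a" where
  "qcomm c x y = x * y - cscale c (y * x)"

lemma calg_hom_qcomm: "calg_hom \<sigma> g \<Longrightarrow> g (qcomm c x y) = qcomm c (g x) (g y)"
  by (simp add: qcomm_def calg_hom_diff calg_hom_mult calg_hom_cscale)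

lemma qcomm_minus_right [simp]: "qcomm c x (- y) = - qcomm c x y"
  and qcomm_zero_right [simp]: "qcomm c x 0 = 0"
  and qcomm_zero_left [simp]: "qcomm c 0 y = 0"
  by (simp_all add: qcomm_def cscale_def)

lemma qcomm_cscale_left: "qcomm c (cscale d x) y = cscale d (qcomm c x y)"
  by (simp add: qcomm_def cscale_diff mult.commute)

lemma qcomm_swap: "c \<noteq> 0 \<Longrightarrow> qcomm (inverse c) y x = - cscale (inverse c) (qcomm c x y)"
  by (simp add: qcomm_def cscale_diff)

lemma commutator_qcomm:
  "qcomm c x y * z - z * qcomm c x y = qcomm c (x * z - z * x) y + qcomm c x (y * z - z * y)"
  by (simp add: qcomm_def algebra_simps cscale_diff)

lemma qcomm_diff_eigen:
  assumes "K * b = cscale c (b * K)" "Ki * b = cscale (inverse c) (b * Ki)"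
  shows "qcomm t (K - Ki) b = cscale (c - t) (b * K) - cscale (inverse c - t) (b * Ki)"
  using assms by (simp add: qcomm_def algebra_simps cscale_diff cscale_diff_left[symmetric])

lemma qcomm_eigen:
  assumes "K * x = cscale c (x * K)" "K * y = cscale d (y * K)"
  shows "K * qcomm s x y = cscale (c * d) (qcomm s x y * K)"
proof -
  have "K * (x * y) = cscale (c * d) (x * y * K)"
    and "K * (y * x) = cscale (c * d) (y * x * K)"
    by (simp_all add: mult.assoc[symmetric] assms) (simp_all add: mult.assoc assms mult.commute)
  then show ?thesis
    unfolding qcomm_def by (simp add: algebra_simps cscale_diff mult.commute)
qed

lemma qcomm_commute:
  assumes "x * z = z * x" "y * z = z * y"
  shows "qcomm c x y * z = z * qcomm c x y"
  using assms by (simp add: qcomm_def algebra_simps cscale_diff) (metis mult.assoc)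

lemma qcomm_jacobi_right:
  assumes "A * C = C * A"
  shows "qcomm c (qcomm c A B) C = qcomm c A (qcomm c B C)"
proof -
  have "B * (A * C) = B * (C * A)" "C * (A * B) = A * (C * B)"
    using assms by (simp_all add: mult.assoc[symmetric])
  then show ?thesis by (simp add: qcomm_def algebra_simps cscale_diff)
qed

lemma qcomm_jacobi_left:
  assumes "A * C = C * A"
  shows "qcomm c A (qcomm c B C) = qcomm c (qcomm c A B) C"
proof -
  have "A * (C * B) = C * (A * B)" "B * (C * A) = B * (A * C)"
    using assms by (simp_all add: mult.assoc[symmetric])
  then show ?thesis by (simp add: qcomm_def algebra_simps cscale_diff)
qed

end

locale Uq_sl = complex_algebra \<sigma> for \<sigma> :: "complex \<Rightarrow> 'a::ring_1" +
  fixes n :: nat and q :: complex and e f k kinv :: "nat \<Rightarrow> 'a" and T :: "nat \<Rightarrow> 'a \<Rightarrow> 'a"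
  assumes q_nonzero: "q \<noteq> 0" and q_ne_one: "q \<noteq> 1" and q_ne_minus_one: "q \<noteq> -1"
    and relations: "Uq_rels n q \<sigma> e f k kinv"
    and braid: "lusztig_T n q \<sigma> e f k kinv T"
begin

lemma k_kinv: "i \<in> {1..<n} \<Longrightarrow> k i * kinv i = 1" "i \<in> {1..<n} \<Longrightarrow> kinv i * k i = 1"
  using relations unfolding Uq_rels_def by blast+

lemma conj_k_e: "i \<in> {1..<n} \<Longrightarrow> j \<in> {1..<n} \<Longrightarrow> k i * e j * kinv i = cscale (q powi cartan i j) (e j)"
  and conj_k_f: "i \<in> {1..<n} \<Longrightarrow> j \<in> {1..<n} \<Longrightarrow> k i * f j * kinv i = cscale (q powi (- cartan i j)) (f j)"
  using relations unfolding Uq_rels_def cscale_def by blast+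

definition kbracket :: "nat \<Rightarrow> 'a" where
  "kbracket i = cscale (inverse (q - inverse q)) (k i - kinv i)"

lemma e_f_commutator: "i \<in> {1..<n} \<Longrightarrow> j \<in> {1..<n} \<Longrightarrow> e i * f j - f j * e i =
    (if i = j then kbracket i else 0)"
  using relations unfolding Uq_rels_def kbracket_def cscale_def by blast

lemma e_far_commute: "i \<in> {1..<n} \<Longrightarrow> j \<in> {1..<n} \<Longrightarrow> far i j \<Longrightarrow> e i * e j = e j * e i"
  and f_far_commute: "i \<in> {1..<n} \<Longrightarrow> j \<in> {1..<n} \<Longrightarrow> far i j \<Longrightarrow> f i * f j = f j * f i"
  using relations unfolding Uq_rels_def by blast+

lemma T_hom: "i \<in> {1..<n} \<Longrightarrow> calg_hom \<sigma> (T i)"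
  using braid unfolding lusztig_T_def by blast

lemma T_e_same: "i \<in> {1..<n} \<Longrightarrow> T i (e i) = - (f i * kinv i)"
  and T_f_same: "i \<in> {1..<n} \<Longrightarrow> T i (f i) = - (k i * e i)"
  using braid unfolding lusztig_T_def by blast+

lemma T_e_adj: "i \<in> {1..<n} \<Longrightarrow> j \<in> {1..<n} \<Longrightarrow> adj i j \<Longrightarrow> T i (e j) = qcomm q (e i) (e j)"
  and T_f_adj: "i \<in> {1..<n} \<Longrightarrow> j \<in> {1..<n} \<Longrightarrow> adj i j \<Longrightarrow> T i (f j) = qcomm (inverse q) (f j) (f i)"
  using braid unfolding lusztig_T_def qcomm_def cscale_def by blast+

lemma T_e_far: "i \<in> {1..<n} \<Longrightarrow> j \<in> {1..<n} \<Longrightarrow> far i j \<Longrightarrow> T i (e j) = e j"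
  and T_f_far: "i \<in> {1..<n} \<Longrightarrow> j \<in> {1..<n} \<Longrightarrow> far i j \<Longrightarrow> T i (f j) = f j"
  using braid unfolding lusztig_T_def by blast+

lemma q_minus_inverse_nonzero: "q - inverse q \<noteq> 0"
proof
  assume "q - inverse q = 0"
  then have "(q - 1) * (q + 1) = 0"
    using q_nonzero by (simp add: field_simps)
  then show False
    using q_ne_one q_ne_minus_one by (simp add: add_eq_0_iff2)
qed

lemma kinv_e: "i \<in> {1..<n} \<Longrightarrow> j \<in> {1..<n} \<Longrightarrow> kinv i * e j = cscale (q powi (- cartan i j)) (e j * kinv i)"
  and k_e: "i \<in> {1..<n} \<Longrightarrow> j \<in> {1..<n} \<Longrightarrow> k i * e j = cscale (q powi cartan i j) (e j * k i)"
  and kinv_f: "i \<in> {1..<n} \<Longrightarrow> j \<in> {1..<n} \<Longrightarrow> kinv i * f j = cscale (q powi cartan i j) (f j * kinv i)"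
  and k_f: "i \<in> {1..<n} \<Longrightarrow> j \<in> {1..<n} \<Longrightarrow> k i * f j = cscale (q powi (- cartan i j)) (f j * k i)"
  using conj_eigen_commute[OF k_kinv conj_k_e] conj_eigen_commute[OF k_kinv conj_k_f] q_nonzero
  by (simp_all add: power_int_minus)

lemma qcomm_kbracket_e:
  assumes "i \<in> {1..<n}" "j \<in> {1..<n}" "adj i j"
  shows "qcomm q (kbracket i) (e j) = - (e j * k i)"
proof -
  have weights: "k i * e j = cscale (inverse q) (e j * k i)"
      "kinv i * e j = cscale (inverse (inverse q)) (e j * kinv i)"
    using k_e[OF assms(1,2)] kinv_e[OF assms(1,2)] assms(3) q_nonzero
    by (auto simp: cartan_def adj_def power_int_minus)
  have "inverse (q - inverse q) * (inverse q - q) = - 1"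
    using q_minus_inverse_nonzero by (simp add: field_simps)
  then show ?thesis
    using qcomm_diff_eigen[OF weights, of q]
    unfolding kbracket_def qcomm_cscale_left by (simp add: cscale_uminus_left)
qed

lemma qcomm_kbracket_f:
  assumes "i \<in> {1..<n}" "j \<in> {1..<n}" "adj i j"
  shows "qcomm q (kbracket i) (f j) = f j * kinv i"
proof -
  have weights: "k i * f j = cscale q (f j * k i)"
      "kinv i * f j = cscale (inverse q) (f j * kinv i)"
    using k_f[OF assms(1,2)] kinv_f[OF assms(1,2)] assms(3) q_nonzero
    by (auto simp: cartan_def adj_def power_int_minus)
  have "inverse (q - inverse q) * (inverse q - q) = - 1"
    using q_minus_inverse_nonzero by (simp add: field_simps)
  then show ?thesis
    using qcomm_diff_eigen[OF weights, of q]
    unfolding kbracket_def qcomm_cscale_left by (simp add: cscale_uminus_left)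
qed

lemma qcomm_e_commutator_f:
  assumes "1 \<le> j" "j + 2 \<le> n"
  shows "qcomm q (e j) (e (j + 1)) * f j - f j * qcomm q (e j) (e (j + 1)) = - (e (j + 1) * k j)"
  using assms commutator_qcomm e_f_commutator[of j j] e_f_commutator[of "j + 1" j]
    qcomm_kbracket_e[of j "j + 1"]
  by (simp add: adj_def)

lemma T_T_e:
  assumes "1 \<le> j" "j + 2 \<le> n"
  shows "T j (T (j + 1) (e j)) = e (j + 1)"
proof -
  have J: "j \<in> {1..<n}" "j + 1 \<in> {1..<n}" "adj j (j + 1)" "adj (j + 1) j"
    using assms by (auto simp: adj_def)
  define X where "X = qcomm q (e j) (e (j + 1))"
  have weight: "inverse q * inverse q * q = inverse q"
    using q_nonzero by (simp add: mult.assoc)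
  have kinv_X: "kinv j * X = cscale (inverse q) (X * kinv j)"
    using qcomm_eigen[OF kinv_e[OF J(1) J(1)] kinv_e[OF J(1) J(2)]]
    unfolding X_def by (simp add: cartan_def power_int_minus power2_eq_square weight)
  have "T j (T (j + 1) (e j)) = qcomm q X (- (f j * kinv j))"
    using T_e_adj[OF J(2) J(1) J(4)] T_e_adj[OF J(1) J(2) J(3)] T_e_same[OF J(1)]
    unfolding X_def by (simp add: calg_hom_qcomm[OF T_hom[OF J(1)]])
  also have "\<dots> = (f j * X - X * f j) * kinv j"
    using q_nonzero by (simp add: qcomm_def algebra_simps mult.assoc kinv_X)
  also have "\<dots> = e (j + 1)"
  proof -
    have "f j * X - X * f j = e (j + 1) * k j"
      using qcomm_e_commutator_f[OF assms] unfolding X_def[symmetric] by (metis minus_diff_eq minus_minus)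
    then show ?thesis
      using k_kinv[OF J(1)] by (simp add: mult.assoc)
  qed
  finally show ?thesis .
qed

lemma qcomm_f_commutator_e:
  assumes "1 \<le> j" "j + 2 \<le> n"
  shows "qcomm (inverse q) (f (j + 1)) (f j) * e j - e j * qcomm (inverse q) (f (j + 1)) (f j)
    = cscale (inverse q) (f (j + 1) * kinv j)"
proof -
  have "f j * e j - e j * f j = - kbracket j" "f (j + 1) * e j - e j * f (j + 1) = 0"
    using assms e_f_commutator[of j j] e_f_commutator[of j "j + 1"] by (simp_all add: algebra_simps)
  then have "qcomm (inverse q) (f (j + 1)) (f j) * e j - e j * qcomm (inverse q) (f (j + 1)) (f j)
      = - qcomm (inverse q) (f (j + 1)) (kbracket j)"
    using commutator_qcomm[of "inverse q" "f (j + 1)" "f j" "e j"] by simp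
  also have "\<dots> = cscale (inverse q) (qcomm q (kbracket j) (f (j + 1)))"
    using qcomm_swap[OF q_nonzero, of "f (j + 1)" "kbracket j"] by simp
  also have "\<dots> = cscale (inverse q) (f (j + 1) * kinv j)"
    using assms qcomm_kbracket_f[of j "j + 1"] by (simp add: adj_def)
  finally show ?thesis .
qed

lemma T_T_f:
  assumes "1 \<le> j" "j + 2 \<le> n"
  shows "T j (T (j + 1) (f j)) = f (j + 1)"
proof -
  have J: "j \<in> {1..<n}" "j + 1 \<in> {1..<n}" "adj j (j + 1)" "adj (j + 1) j"
    using assms by (auto simp: adj_def)
  define X where "X = qcomm (inverse q) (f (j + 1)) (f j)"
  have weight: "q * (inverse q * inverse q) = inverse q"
    using q_nonzero by (simp add: mult.assoc[symmetric])
  have "k j * X = cscale (inverse q) (X * k j)"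
    using qcomm_eigen[OF k_f[OF J(1) J(2)] k_f[OF J(1) J(1)]]
    unfolding X_def by (simp add: cartan_def power_int_minus power2_eq_square weight)
  then have X_k: "X * k j = cscale q (k j * X)"
    using q_nonzero by simp
  have "T j (T (j + 1) (f j)) = qcomm (inverse q) (- (k j * e j)) X"
    using T_f_adj[OF J(2) J(1) J(4)] T_f_adj[OF J(1) J(2) J(3)] T_f_same[OF J(1)]
    unfolding X_def by (simp add: calg_hom_qcomm[OF T_hom[OF J(1)]])
  also have "\<dots> = k j * (X * e j - e j * X)"
  proof -
    have "X * (k j * e j) = cscale q (k j * (X * e j))"
      by (simp add: mult.assoc[symmetric] X_k)
    then show ?thesis
      using q_nonzero by (simp add: qcomm_def right_diff_distrib mult.assoc)
  qed
  also have "\<dots> = f (j + 1)"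
    using qcomm_f_commutator_e[OF assms] k_kinv(1)[OF J(1)] k_f[OF J(1) J(2)] q_nonzero
    unfolding X_def by (simp add: mult.assoc[symmetric] cartan_def) (simp add: mult.assoc)
  finally show ?thesis .
qed

(* Not m < n: with truncated subtraction this bound also covers the empty chain when n = 0. *)
lemma Tchain_hom: "m \<le> n - 1 \<Longrightarrow> calg_hom \<sigma> (Tchain T m)"
proof (induction m)
  case 0
  show ?case
    unfolding Tchain_0 by (rule calg_hom_id)
next
  case (Suc m)
  then show ?case
    unfolding Tchain_Suc by (intro calg_hom_comp T_hom) auto
qed

lemma Tchain_far:
  assumes "l < n" "m + 1 < l"
  shows "Tchain T m (e l) = e l \<and> Tchain T m (f l) = f l"
  using assms
proof (induction m)
  case 0
  then show ?case by simp
next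
  case (Suc m)
  then show ?case
    by (simp add: Tchain_Suc T_e_far T_f_far far_def)
qed

lemma Tchain_shift:
  assumes "1 \<le> l" "l < m" "m < n"
  shows "Tchain T m (e l) = e (l + 1) \<and> Tchain T m (f l) = f (l + 1)"
  using assms
proof (induction m)
  case 0
  then show ?case by simp
next
  case (Suc m)
  show ?case
  proof (cases "m = l")
    case True
    have "Tchain T (Suc m) = Tchain T (l - 1) \<circ> T l \<circ> T (l + 1)"
      using True Suc.prems(1) by (cases l) (simp_all add: Tchain_Suc)
    then show ?thesis
      using Suc.prems T_T_e[of l] T_T_f[of l] Tchain_far[of "l + 1" "l - 1"] by simp
  next
    case False
    then show ?thesis
      using Suc by (simp add: Tchain_Suc T_e_far T_f_far far_def)
  qed
qed

definition Tw_head :: "nat \<Rightarrow> 'a \<Rightarrow> 'a" where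
  "Tw_head i = foldr (\<circ>) (map (\<lambda>l. Tchain T (n - l)) [1..<i]) id"

lemma Tw_head_Suc_0 [simp]: "Tw_head (Suc 0) = id"
  unfolding Tw_head_def by simp

lemma Tw_head_Suc: "1 \<le> i \<Longrightarrow> Tw_head (Suc i) = Tw_head i \<circ> Tchain T (n - i)"
  unfolding Tw_head_def by (simp add: foldr_comp_id[of _ "Tchain T (n - i)"])

lemma Tw_head_hom: "1 \<le> i \<Longrightarrow> calg_hom \<sigma> (Tw_head i)"
proof (induction i rule: nat_induct_at_least)
  case base
  show ?case
    unfolding One_nat_def Tw_head_Suc_0 by (rule calg_hom_id)
next
  case (Suc i)
  then show ?case
    unfolding Tw_head_Suc[OF Suc.hyps] by (intro calg_hom_comp Tchain_hom) auto
qed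

lemma Tw_head_shift:
  assumes "1 \<le> i" "1 \<le> l" "l + i \<le> n"
  shows "Tw_head i (e l) = e (l + i - 1) \<and> Tw_head i (f l) = f (l + i - 1)"
  using assms
proof (induction i arbitrary: l rule: nat_induct_at_least)
  case base
  then show ?case by simp
next
  case (Suc i)
  then show ?case
    using Tchain_shift[of l "n - i"] Suc.IH[of "l + 1"] by (simp add: Tw_head_Suc)
qed

abbreviation E :: "nat \<Rightarrow> nat \<Rightarrow> 'a" where
  "E \<equiv> Eij n T e f"

lemma E_upper: "i < j \<Longrightarrow> E i j = Tw_head i (Tchain T (j - i - 1) (e (j - i)))"
  and E_lower: "j < i \<Longrightarrow> E i j = Tw_head j (Tchain T (i - j - 1) (f (i - j)))"
  unfolding Eij_def Tw_def Tw_head_def by simp_all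

lemma E_simple: "i \<in> {1..<n} \<Longrightarrow> E i (i + 1) = e i \<and> E (i + 1) i = f i"
  using Tw_head_shift[of i 1] by (simp add: E_upper E_lower)

lemma E_step_upper:
  assumes "1 \<le> i" "i < j" "j < n"
  shows "E i (Suc j) = qcomm q (E i j) (e j)"
proof -
  obtain r where r: "j - i = Suc r"
    using assms(2) by (metis Suc_diff_Suc)
  have "Tchain T (j - i) (e (Suc j - i)) = Tchain T r (T (Suc r) (e (Suc (Suc r))))"
    using r assms(2) by (simp add: Tchain_Suc Suc_diff_le)
  also have "\<dots> = qcomm q (Tchain T r (e (Suc r))) (e (Suc (Suc r)))"
    using T_e_adj[of "Suc r" "Suc (Suc r)"] Tchain_far[of "Suc (Suc r)" r] Tchain_hom[of r] r assms
    by (simp add: adj_def calg_hom_qcomm)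
  finally have Tchain_step:
    "Tchain T (j - i) (e (Suc j - i)) = qcomm q (Tchain T r (e (Suc r))) (e (Suc (Suc r)))" .
  have "Suc (r + i) = j"
    using r assms(2) by arith
  then show ?thesis
    using Tchain_step E_upper[of i j] E_upper[of i "Suc j"] Tw_head_shift[of i "Suc (Suc r)"] r assms
    by (simp add: calg_hom_qcomm[OF Tw_head_hom] Suc_diff_le)
qed

lemma E_step_lower:
  assumes "1 \<le> j" "j < i" "i < n"
  shows "E (Suc i) j = qcomm (inverse q) (f i) (E i j)"
proof -
  obtain r where r: "i - j = Suc r"
    using assms(2) by (metis Suc_diff_Suc)
  have "Tchain T (i - j) (f (Suc i - j)) = Tchain T r (T (Suc r) (f (Suc (Suc r))))"
    using r assms(2) by (simp add: Tchain_Suc Suc_diff_le)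
  also have "\<dots> = qcomm (inverse q) (f (Suc (Suc r))) (Tchain T r (f (Suc r)))"
    using T_f_adj[of "Suc r" "Suc (Suc r)"] Tchain_far[of "Suc (Suc r)" r] Tchain_hom[of r] r assms
    by (simp add: adj_def calg_hom_qcomm)
  finally have Tchain_step:
    "Tchain T (i - j) (f (Suc i - j)) = qcomm (inverse q) (f (Suc (Suc r))) (Tchain T r (f (Suc r)))" .
  have "Suc (r + j) = i"
    using r assms(2) by arith
  then show ?thesis
    using Tchain_step E_lower[of j i] E_lower[of j "Suc i"] Tw_head_shift[of j "Suc (Suc r)"] r assms
    by (simp add: calg_hom_qcomm[OF Tw_head_hom] Suc_diff_le)
qed

lemma E_upper_commute_e:
  assumes "1 \<le> i" "i < m" "m < l" "l < n"
  shows "E i m * e l = e l * E i m"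
  using assms
proof (induction m)
  case 0
  then show ?case by simp
next
  case (Suc m)
  show ?case
  proof (cases "m = i")
    case True
    then show ?thesis
      using E_simple[of i] e_far_commute[of i l] Suc.prems by (simp add: far_def)
  next
    case False
    then show ?thesis
      using Suc E_step_upper[of i m] e_far_commute[of m l]
      by (simp add: far_def qcomm_commute)
  qed
qed

lemma E_lower_commute_f:
  assumes "1 \<le> j" "j < m" "m < l" "l < n"
  shows "E m j * f l = f l * E m j"
  using assms
proof (induction m)
  case 0
  then show ?case by simp
next
  case (Suc m)
  show ?case
  proof (cases "m = j")
    case True
    then show ?thesis
      using E_simple[of j] f_far_commute[of j l] Suc.prems by (simp add: far_def)
  next
    case False
    then show ?thesis
      using Suc E_step_lower[of j m] f_far_commute[of m l]
      by (simp add: far_def qcomm_commute)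
  qed
qed

lemma E_upper_qcomm:
  assumes "1 \<le> i" "i < m" "m < j" "j \<le> n"
  shows "E i j = qcomm q (E i m) (E m j)"
  using assms
proof (induction j)
  case 0
  then show ?case by simp
next
  case (Suc j)
  show ?case
  proof (cases "j = m")
    case True
    then show ?thesis
      using E_step_upper[of i m] E_simple[of m] Suc.prems by simp
  next
    case False
    then have "E i (Suc j) = qcomm q (qcomm q (E i m) (E m j)) (e j)"
      using Suc E_step_upper[of i j] by simp
    also have "\<dots> = qcomm q (E i m) (qcomm q (E m j) (e j))"
      using E_upper_commute_e[of i m j] False Suc.prems by (simp add: qcomm_jacobi_right)
    also have "\<dots> = qcomm q (E i m) (E m (Suc j))"
      using E_step_upper[of m j] False Suc.prems by simp
    finally show ?thesis .
  qed
qed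

lemma E_lower_qcomm:
  assumes "1 \<le> j" "j < m" "m < i" "i \<le> n"
  shows "E i j = qcomm (inverse q) (E i m) (E m j)"
  using assms
proof (induction i)
  case 0
  then show ?case by simp
next
  case (Suc i)
  show ?case
  proof (cases "i = m")
    case True
    then show ?thesis
      using E_step_lower[of j m] E_simple[of m] Suc.prems by simp
  next
    case False
    then have "E (Suc i) j = qcomm (inverse q) (f i) (qcomm (inverse q) (E i m) (E m j))"
      using Suc E_step_lower[of j i] by simp
    also have "\<dots> = qcomm (inverse q) (qcomm (inverse q) (f i) (E i m)) (E m j)"
      using E_lower_commute_f[of j m i] False Suc.prems by (simp add: qcomm_jacobi_left)
    also have "\<dots> = qcomm (inverse q) (E (Suc i) m) (E m j)"
      using E_step_lower[of m i] False Suc.prems by simp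
    finally show ?thesis .
  qed
qed

end

theorem proposition3p1:
  fixes n :: nat and q :: complex and \<sigma> :: "complex \<Rightarrow> 'a::ring_1"
    and e f k kinv :: "nat \<Rightarrow> 'a" and T :: "nat \<Rightarrow> 'a \<Rightarrow> 'a"
  assumes "q \<noteq> 0" and "q \<noteq> 1" and "q \<noteq> -1"
    and "calg \<sigma>"
    and "Uq_rels n q \<sigma> e f k kinv"
    and "lusztig_T n q \<sigma> e f k kinv T"
  shows "(\<forall>i\<in>{1..<n}. Eij n T e f i (i + 1) = e i \<and> Eij n T e f (i + 1) i = f i)
    \<and> (\<forall>i k' j. 1 \<le> i \<and> i < k' \<and> k' < j \<and> j \<le> n \<longrightarrow>
         Eij n T e f i j = Eij n T e f i k' * Eij n T e f k' j - \<sigma> q * (Eij n T e f k' j * Eij n T e f i k'))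
    \<and> (\<forall>i k' j. n \<ge> i \<and> i > k' \<and> k' > j \<and> j \<ge> 1 \<longrightarrow>
         Eij n T e f i j = Eij n T e f i k' * Eij n T e f k' j - \<sigma> (inverse q) * (Eij n T e f k' j * Eij n T e f i k'))"
proof -
  interpret Uq_sl \<sigma> n q e f k kinv T
    using assms by unfold_locales
  show ?thesis
    using E_simple E_upper_qcomm E_lower_qcomm unfolding qcomm_def cscale_def by auto
qed

end
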